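(* Let $n\ge 1$ and let $(\xi_i,\mathcal{F}_i)_{i=0,\dots,n}$ be a sequence of real-valued martingale differences on a probability space $(\Omega,\mathcal{F},\mathbf{P})$, with $\xi_0=0$, $\{\emptyset,\Omega\}=\mathcal{F}_0\subseteq\cdots\subseteq\mathcal{F}_n\subseteq\mathcal{F}$ and $\mathbf{E}[\xi_i\mid\mathcal{F}_{i-1}]=0$ for $i=1,\dots,n$. Let $S_k=\sum_{i=1}^k\xi_i$. Let $\alpha\in(0,1)$ and assume $$C_n:=\sum_{i=1}^n\mathbf{E}\big[\xi_i^2\exp\{(\xi_i^+)^\alpha\}\big]<\infty .$$ Define $\Upsilon(S)_k=\sum_{i=1}^k\mathbf{E}\big[\xi_i^2\exp\{(\xi_i^+)^\alpha\}\mid\mathcal{F}_{i-1}\big]$ for $k\in[1,n]$. Then for all $x,u>0$, $$\mathbf{P}\big(S_k\ge x \text{ and } \Upsilon(S)_k\le u \text{ for some } k\in[1,n]\big)\le \begin{cases} \exp\Big\{-\dfrac{x^2}{2u}\Big\}+C_n\Big(\dfrac{x}{u}\Big)^{2/(1-\alpha)}\exp\Big\{-\Big(\dfrac{u}{x}\Big)^{\alpha/(1-\alpha)}\Big\} & \text{if } 0\le x<u^{1/(2-\alpha)},\\[2mm] \exp\Big\{-x^\alpha\Big(1-\dfrac{u}{2x^{2-\alpha}}\Big)\Big\}+\dfrac{C_n}{x^2}\exp\{-x^\alpha\} & \text{if } x\ge u^{1/(2-\alpha)}. \end{cases}$$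
   Context: $x^+=\max\{x,0\}$. *)

theory Defs
  imports "HOL-Probability.Probability"
begin

definition pos_part :: "real \<Rightarrow> real" where
  "pos_part x = max x 0"

definition partial_sum :: "(nat \<Rightarrow> 'a \<Rightarrow> real) \<Rightarrow> nat \<Rightarrow> 'a \<Rightarrow> real" where
  "partial_sum \<xi> k \<omega> = (\<Sum>i = 1..k. \<xi> i \<omega>)"

definition wt :: "real \<Rightarrow> real \<Rightarrow> real" where
  "wt \<alpha> y = y\<^sup>2 * exp (pos_part y powr \<alpha>)"

definition Upsilon ::
  "'a measure \<Rightarrow> (nat \<Rightarrow> 'a measure) \<Rightarrow> (nat \<Rightarrow> 'a \<Rightarrow> real) \<Rightarrow> real \<Rightarrow> nat \<Rightarrow> 'a \<Rightarrow> real" where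
  "Upsilon M F \<xi> \<alpha> k \<omega> =
     (\<Sum>i = 1..k. real_cond_exp M (F (i - 1)) (\<lambda>w. wt \<alpha> (\<xi> i w)) \<omega>)"

end

theory Submission
  imports Defs
begin

text \<open>Truncate the differences at a level \<open>y > 0\<close>. For \<open>0 < \<lambda> \<le> y powr (\<alpha> - 1)\<close> the
  elementary bound \<open>exp (\<lambda> t) \<le> 1 + \<lambda> t + \<lambda>\<^sup>2/2 \<cdot> t\<^sup>2 exp ((t\<^sup>+) powr \<alpha>)\<close> for \<open>t \<le> y\<close>,
  together with the martingale property, makes \<open>Z k = exp (\<lambda> T k - \<lambda>\<^sup>2/2 \<cdot> \<Upsilon>(S) k)\<close>,
  where \<open>T k\<close> is the partial sum of the truncated differences, a nonnegative supermartingale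
  with \<open>Z 0 = 1\<close>. If \<open>S k \<ge> x\<close> and \<open>\<Upsilon>(S) k \<le> u\<close> while no difference exceeds \<open>y\<close>, then
  \<open>Z k \<ge> exp (\<lambda> x - \<lambda>\<^sup>2 u / 2)\<close>, so the maximal inequality for nonnegative supermartingales
  bounds the probability of this event by \<open>exp (- \<lambda> x + \<lambda>\<^sup>2 u / 2)\<close>; by Markov's inequality
  for the weight, some difference exceeds \<open>y\<close> with probability at most
  \<open>C n / (y\<^sup>2 exp (y powr \<alpha>))\<close>. The two regimes come from
  \<open>(\<lambda>, y) = (x/u, (u/x) powr (1/(1-\<alpha>)))\<close> and \<open>(\<lambda>, y) = (x powr (\<alpha> - 1), x)\<close>.\<close>

lemma exp_le_quadratic_of_nonpos:
  fixes s :: real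
  assumes "s \<le> 0"
  shows "exp s \<le> 1 + s + s\<^sup>2 / 2"
proof (cases "s = 0")
  case False
  with assms have "s < 0" by simp
  from Maclaurin_minus[OF this, of 2 "\<lambda>_. exp" exp]
  obtain t where t: "t < 0" "exp s = (\<Sum>m<2. exp 0 / fact m * s ^ m) + exp t / fact 2 * s ^ 2"
    by auto
  have "exp t / fact 2 * s ^ 2 \<le> s\<^sup>2 / 2"
    using t(1) by (simp add: mult_left_le_one_le)
  moreover have "(\<Sum>m<2. exp 0 / fact m * s ^ m) = 1 + s"
    by (simp add: numeral_2_eq_2)
  ultimately show ?thesis using t(2) by simp
qed simp

lemma exp_le_quadratic_of_nonneg:
  fixes s :: real
  assumes "0 \<le> s"
  shows "exp s \<le> 1 + s + s\<^sup>2 / 2 * exp s"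
proof -
  obtain t where t: "\<bar>t\<bar> \<le> \<bar>s\<bar>" "exp s = (\<Sum>m<2. s ^ m / fact m) + exp t / fact 2 * s ^ 2"
    using Maclaurin_exp_le[of s 2] by blast
  have "exp t \<le> exp s"
    using t(1) assms by simp
  then have "exp t / fact 2 * s ^ 2 \<le> s\<^sup>2 / 2 * exp s"
    by (simp add: mult_right_mono mult.commute)
  moreover have "(\<Sum>m<2. s ^ m / fact m) = 1 + s"
    by (simp add: numeral_2_eq_2)
  ultimately show ?thesis using t(2) by simp
qed

lemma wt_nonneg: "0 \<le> wt a t"
  by (simp add: wt_def)

lemma wt_pos: "t \<noteq> 0 \<Longrightarrow> 0 < wt a t"
  by (simp add: wt_def)

lemma wt_mono:
  assumes "0 < s" "s \<le> t" "0 \<le> a"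
  shows "wt a s \<le> wt a t"
proof -
  have "s\<^sup>2 \<le> t\<^sup>2" "s powr a \<le> t powr a"
    using assms by (simp_all add: power_mono powr_mono2)
  then show ?thesis
    using assms by (simp add: wt_def pos_part_def mult_mono)
qed

lemma borel_measurable_wt [measurable]:
  assumes [measurable]: "f \<in> borel_measurable N"
  shows "(\<lambda>\<omega>. wt a (f \<omega>)) \<in> borel_measurable N"
  unfolding wt_def pos_part_def by measurable

text \<open>For \<open>0 < t \<le> y\<close> the constraint on \<open>l\<close> gives \<open>l t \<le> t powr a\<close>,
  which is exactly what the factor \<open>exp ((t\<^sup>+) powr a)\<close> of the weight absorbs.\<close>

lemma exp_le_quadratic_wt:
  fixes a y l t :: real
  assumes a: "0 < a" "a < 1" and y: "0 < y" and l: "0 < l" "l \<le> y powr (a - 1)"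
    and t: "t \<le> y"
  shows "exp (l * t) \<le> 1 + l * t + l\<^sup>2 / 2 * wt a t"
proof (cases "t \<le> 0")
  case True
  then have "exp (l * t) \<le> 1 + l * t + (l * t)\<^sup>2 / 2"
    using l by (intro exp_le_quadratic_of_nonpos) (simp add: mult_nonneg_nonpos)
  also have "(l * t)\<^sup>2 / 2 \<le> l\<^sup>2 / 2 * wt a t"
    unfolding wt_def by (simp add: power_mult_distrib mult_le_cancel_left1 mult_left_mono)
  finally show ?thesis by simp
next
  case False
  then have tp: "0 < t" by simp
  have "l \<le> t powr (a - 1)"
    using l(2) powr_mono2'[of "a - 1" t y] a tp t by simp
  then have "l * t \<le> t powr (a - 1) * t"
    using tp by simp
  also have "\<dots> = t powr a"
    using tp powr_mult_base[of t "a - 1"] by (simp add: mult.commute)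
  finally have lt: "l * t \<le> t powr a" .
  have "exp (l * t) \<le> 1 + l * t + (l * t)\<^sup>2 / 2 * exp (l * t)"
    using tp l by (intro exp_le_quadratic_of_nonneg) simp
  also have "(l * t)\<^sup>2 / 2 * exp (l * t) \<le> (l * t)\<^sup>2 / 2 * exp (t powr a)"
    using lt by (intro mult_left_mono) auto
  also have "\<dots> = l\<^sup>2 / 2 * wt a t"
    using tp by (simp add: wt_def pos_part_def power_mult_distrib)
  finally show ?thesis by simp
qed

section \<open>Maximal inequality for nonnegative supermartingales\<close>

locale finite_filtration = prob_space M for M :: "'a measure" +
  fixes F :: "nat \<Rightarrow> 'a measure" and n :: nat
  assumes subalgebra_F: "\<And>i. i \<le> n \<Longrightarrow> subalgebra M (F i)"
    and sets_F_mono: "\<And>i j. i \<le> j \<Longrightarrow> j \<le> n \<Longrightarrow> sets (F i) \<subseteq> sets (F j)"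
begin

lemma sigma_finite_subalgebra_F: "i \<le> n \<Longrightarrow> sigma_finite_subalgebra M (F i)"
  by (intro finite_measure_subalgebra_is_sigma_finite)
    (simp add: finite_measure_subalgebra_def finite_measure_subalgebra_axioms_def
      subalgebra_F finite_measure_axioms)

lemma space_F: "k \<le> n \<Longrightarrow> space (F k) = space M"
  using subalgebra_F by (auto simp: subalgebra_def)

lemma sets_F_subset: "k \<le> n \<Longrightarrow> sets (F k) \<subseteq> sets M"
  using subalgebra_F by (auto simp: subalgebra_def)

lemma measurable_F_mono:
  assumes "i \<le> k" "k \<le> n" "f \<in> borel_measurable (F i)"
  shows "f \<in> borel_measurable (F k)"
proof -
  have "subalgebra (F k) (F i)"
    using subalgebra_F[of i] subalgebra_F[of k] sets_F_mono[of i k] assms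
    by (auto simp: subalgebra_def)
  then show ?thesis
    using measurable_from_subalg assms(3) by blast
qed

lemma measurable_F_M: "k \<le> n \<Longrightarrow> f \<in> borel_measurable (F k) \<Longrightarrow> f \<in> borel_measurable M"
  using measurable_from_subalg[OF subalgebra_F] by blast

definition stays_below :: "(nat \<Rightarrow> 'a \<Rightarrow> real) \<Rightarrow> real \<Rightarrow> nat \<Rightarrow> 'a set" where
  "stays_below Z c k = {\<omega> \<in> space M. \<forall>j\<in>{..<k}. Z j \<omega> < c}"

definition first_reach :: "(nat \<Rightarrow> 'a \<Rightarrow> real) \<Rightarrow> real \<Rightarrow> nat \<Rightarrow> 'a set" where
  "first_reach Z c k = {\<omega> \<in> stays_below Z c k. c \<le> Z k \<omega>}"

lemma stays_below_0: "stays_below Z c 0 = space M"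
  by (simp add: stays_below_def)

lemma indicator_stays_below_split:
  "indicator (stays_below Z c k) \<omega>
    = (indicator (first_reach Z c k) \<omega> + indicator (stays_below Z c (Suc k)) \<omega> :: real)"
  by (auto simp: stays_below_def first_reach_def lessThan_Suc indicator_def)

context
  fixes Z :: "nat \<Rightarrow> 'a \<Rightarrow> real"
  assumes adapted_Z: "\<And>k. k \<le> n \<Longrightarrow> Z k \<in> borel_measurable (F k)"
begin

lemma sets_stays_below_Suc:
  assumes "k \<le> n"
  shows "stays_below Z c (Suc k) \<in> sets (F k)"
proof -
  have "Measurable.pred (F k) (\<lambda>\<omega>. \<forall>j\<in>{..<Suc k}. Z j \<omega> < c)"
  proof (rule pred_intros_finite(3))
    fix j assume "j \<in> {..<Suc k}"
    then have [measurable]: "Z j \<in> borel_measurable (F k)"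
      using assms by (intro measurable_F_mono[OF _ _ adapted_Z]) auto
    show "Measurable.pred (F k) (\<lambda>\<omega>. Z j \<omega> < c)" by measurable
  qed simp
  then show ?thesis
    unfolding stays_below_def space_F[OF assms, symmetric] by (rule predE)
qed

lemma sets_stays_below:
  assumes "k \<le> n"
  shows "stays_below Z c k \<in> sets (F k)"
proof (cases k)
  case 0
  then show ?thesis
    by (metis sets.top space_F[OF assms] stays_below_0)
next
  case (Suc k')
  then show ?thesis
    using sets_stays_below_Suc[of k' c] sets_F_mono[of k' k] assms by auto
qed

lemma sets_first_reach:
  assumes "k \<le> n"
  shows "first_reach Z c k \<in> sets (F k)"
proof -
  have [measurable]: "Z k \<in> borel_measurable (F k)"
    using adapted_Z assms .
  have "{\<omega> \<in> space (F k). c \<le> Z k \<omega>} \<in> sets (F k)" by measurable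
  with sets_stays_below[OF assms]
  have "stays_below Z c k \<inter> {\<omega> \<in> space (F k). c \<le> Z k \<omega>} \<in> sets (F k)" by blast
  also have "stays_below Z c k \<inter> {\<omega> \<in> space (F k). c \<le> Z k \<omega>} = first_reach Z c k"
    using space_F[OF assms] by (auto simp: first_reach_def stays_below_def)
  finally show ?thesis .
qed

lemma events_stays_below: "k \<le> n \<Longrightarrow> stays_below Z c k \<in> events"
  using sets_stays_below sets_F_subset by blast

lemma events_first_reach: "k \<le> n \<Longrightarrow> first_reach Z c k \<in> events"
  using sets_first_reach sets_F_subset by blast

context
  assumes Z_nonneg: "\<And>k \<omega>. k \<le> n \<Longrightarrow> \<omega> \<in> space M \<Longrightarrow> 0 \<le> Z k \<omega>"
    and integrable_Z: "\<And>k. k \<le> n \<Longrightarrow> integrable M (Z k)"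
    and supermartingale_Z: "\<And>k A. k < n \<Longrightarrow> A \<in> sets (F k) \<Longrightarrow>
      (\<integral>\<omega>. Z (Suc k) \<omega> * indicator A \<omega> \<partial>M) \<le> (\<integral>\<omega>. Z k \<omega> * indicator A \<omega> \<partial>M)"
begin

text \<open>Optional stopping at the first time \<open>Z\<close> reaches \<open>c\<close>: \<open>stays_below Z c (Suc m)\<close>
  is an event of \<open>F m\<close>, so on it \<open>Z (Suc m)\<close> may be replaced by \<open>Z m\<close>.\<close>

lemma sum_integral_first_reach_le:
  assumes "m \<le> n"
  shows "(\<Sum>k=m..n. \<integral>\<omega>. Z k \<omega> * indicator (first_reach Z c k) \<omega> \<partial>M)
    \<le> (\<integral>\<omega>. Z m \<omega> * indicator (stays_below Z c m) \<omega> \<partial>M)"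
  using assms
proof (induction m rule: inc_induct)
  case base
  show ?case
    using Z_nonneg
    by (auto simp: first_reach_def intro!: integral_mono integrable_real_mult_indicator
        integrable_Z events_stays_below events_first_reach[unfolded first_reach_def]
        split: split_indicator)
next
  case (step m)
  have integrable_first: "integrable M (\<lambda>\<omega>. Z m \<omega> * indicator (first_reach Z c m) \<omega>)"
    and integrable_stays: "integrable M (\<lambda>\<omega>. Z m \<omega> * indicator (stays_below Z c (Suc m)) \<omega>)"
    using step(2) by (auto intro!: integrable_real_mult_indicator integrable_Z
        events_first_reach events_stays_below)
  have "(\<Sum>k=m..n. \<integral>\<omega>. Z k \<omega> * indicator (first_reach Z c k) \<omega> \<partial>M)
      = (\<integral>\<omega>. Z m \<omega> * indicator (first_reach Z c m) \<omega> \<partial>M)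
        + (\<Sum>k=Suc m..n. \<integral>\<omega>. Z k \<omega> * indicator (first_reach Z c k) \<omega> \<partial>M)"
    using step(2) by (simp add: sum.atLeast_Suc_atMost)
  also have "\<dots> \<le> (\<integral>\<omega>. Z m \<omega> * indicator (first_reach Z c m) \<omega> \<partial>M)
        + (\<integral>\<omega>. Z (Suc m) \<omega> * indicator (stays_below Z c (Suc m)) \<omega> \<partial>M)"
    using step.IH by simp
  also have "\<dots> \<le> (\<integral>\<omega>. Z m \<omega> * indicator (first_reach Z c m) \<omega> \<partial>M)
        + (\<integral>\<omega>. Z m \<omega> * indicator (stays_below Z c (Suc m)) \<omega> \<partial>M)"
    using step(2) by (simp add: supermartingale_Z sets_stays_below_Suc)
  also have "\<dots> = (\<integral>\<omega>. Z m \<omega> * indicator (first_reach Z c m) \<omega>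
        + Z m \<omega> * indicator (stays_below Z c (Suc m)) \<omega> \<partial>M)"
    using integrable_first integrable_stays by simp
  also have "\<dots> = (\<integral>\<omega>. Z m \<omega> * indicator (stays_below Z c m) \<omega> \<partial>M)"
    by (simp only: indicator_stays_below_split[of Z c m] distrib_left)
  finally show ?case .
qed

lemma measure_first_reach_le:
  assumes "0 < c" "k \<le> n"
  shows "measure M (first_reach Z c k) \<le> (\<integral>\<omega>. Z k \<omega> * indicator (first_reach Z c k) \<omega> \<partial>M) / c"
proof -
  have "c * measure M (first_reach Z c k) = (\<integral>\<omega>. c * indicator (first_reach Z c k) \<omega> \<partial>M)"
    using events_first_reach[OF assms(2)] by simp
  also have "\<dots> \<le> (\<integral>\<omega>. Z k \<omega> * indicator (first_reach Z c k) \<omega> \<partial>M)"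
    using assms events_first_reach[OF assms(2)]
    by (intro integral_mono integrable_real_mult_indicator integrable_Z)
      (auto simp: first_reach_def split: split_indicator)
  finally show ?thesis
    using assms(1) by (simp add: field_simps)
qed

lemma nonneg_supermartingale_maximal_inequality:
  assumes "0 < c"
  shows "measure M {\<omega> \<in> space M. \<exists>k\<le>n. c \<le> Z k \<omega>} \<le> (\<integral>\<omega>. Z 0 \<omega> \<partial>M) / c"
proof -
  have "{\<omega> \<in> space M. \<exists>k\<le>n. c \<le> Z k \<omega>} \<subseteq> (\<Union>k\<in>{0..n}. first_reach Z c k)"
  proof safe
    fix \<omega> k assume \<omega>: "\<omega> \<in> space M" and k: "k \<le> n" "c \<le> Z k \<omega>"
    define j where "j = (LEAST j. c \<le> Z j \<omega>)"
    have "c \<le> Z j \<omega>" "j \<le> k"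
      unfolding j_def using k by (auto intro: LeastI Least_le)
    moreover have "\<forall>i\<in>{..<j}. Z i \<omega> < c"
      unfolding j_def using not_less_Least by force
    ultimately show "\<omega> \<in> (\<Union>k\<in>{0..n}. first_reach Z c k)"
      using \<omega> k by (auto simp: first_reach_def stays_below_def)
  qed
  then have "measure M {\<omega> \<in> space M. \<exists>k\<le>n. c \<le> Z k \<omega>}
      \<le> measure M (\<Union>k\<in>{0..n}. first_reach Z c k)"
    by (intro finite_measure_mono sets.finite_UN) (auto intro: events_first_reach)
  also have "\<dots> \<le> (\<Sum>k=0..n. measure M (first_reach Z c k))"
    by (intro measure_UNION_le) (auto intro: events_first_reach)
  also have "\<dots> \<le> (\<Sum>k=0..n. (\<integral>\<omega>. Z k \<omega> * indicator (first_reach Z c k) \<omega> \<partial>M) / c)"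
    using assms by (intro sum_mono measure_first_reach_le) auto
  also have "\<dots> \<le> (\<integral>\<omega>. Z 0 \<omega> * indicator (stays_below Z c 0) \<omega> \<partial>M) / c"
    using assms sum_integral_first_reach_le[of 0 c]
    by (simp add: sum_divide_distrib[symmetric] divide_right_mono)
  also have "\<dots> = (\<integral>\<omega>. Z 0 \<omega> \<partial>M) / c"
    unfolding stays_below_0 by (simp cong: Bochner_Integration.integral_cong)
  finally show ?thesis .
qed

end

end

end

section \<open>The exponential supermartingale of the truncated differences\<close>

lemma integrable_mult_bounded:
  fixes f W :: "'a \<Rightarrow> real"
  assumes "integrable M f" "W \<in> borel_measurable M" "\<And>\<omega>. \<omega> \<in> space M \<Longrightarrow> \<bar>W \<omega>\<bar> \<le> K"
  shows "integrable M (\<lambda>\<omega>. W \<omega> * f \<omega>)"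
proof (rule Bochner_Integration.integrable_bound[where f="\<lambda>\<omega>. K * f \<omega>"])
  show "AE \<omega> in M. norm (W \<omega> * f \<omega>) \<le> norm (K * f \<omega>)"
    using assms(3) by (intro AE_I2) (force simp: abs_mult intro!: mult_right_mono)
qed (use assms in auto)

locale martingale_differences = finite_filtration +
  fixes \<xi> :: "nat \<Rightarrow> 'a \<Rightarrow> real" and \<alpha> :: real
  assumes adapted: "\<And>i. i \<le> n \<Longrightarrow> \<xi> i \<in> borel_measurable (F i)"
    and integrable_\<xi>: "\<And>i. i \<le> n \<Longrightarrow> integrable M (\<xi> i)"
    and cond_exp_\<xi>: "\<And>i. 1 \<le> i \<Longrightarrow> i \<le> n \<Longrightarrow>
      AE \<omega> in M. real_cond_exp M (F (i - 1)) (\<xi> i) \<omega> = 0"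
    and \<alpha>: "0 < \<alpha>" "\<alpha> < 1"
    and integrable_wt: "\<And>i. 1 \<le> i \<Longrightarrow> i \<le> n \<Longrightarrow> integrable M (\<lambda>\<omega>. wt \<alpha> (\<xi> i \<omega>))"
begin

lemma borel_measurable_\<xi>: "i \<le> n \<Longrightarrow> \<xi> i \<in> borel_measurable M"
  using measurable_F_M adapted by blast

definition trunc :: "real \<Rightarrow> nat \<Rightarrow> 'a \<Rightarrow> real" where
  "trunc y i \<omega> = (if \<xi> i \<omega> \<le> y then \<xi> i \<omega> else 0)"

text \<open>The conditional expectation is nonnegative only almost everywhere; clipping it
  keeps the exponential process below a constant everywhere and changes
  \<open>Upsilon\<close> only on a null set.\<close>

definition cond_wt :: "nat \<Rightarrow> 'a \<Rightarrow> real" where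
  "cond_wt i \<omega> = max 0 (real_cond_exp M (F (i - 1)) (\<lambda>w. wt \<alpha> (\<xi> i w)) \<omega>)"

definition exp_process :: "real \<Rightarrow> real \<Rightarrow> nat \<Rightarrow> 'a \<Rightarrow> real" where
  "exp_process y l k \<omega> =
    exp (l * (\<Sum>i=1..k. trunc y i \<omega>) - l\<^sup>2 / 2 * (\<Sum>i=1..k. cond_wt i \<omega>))"

lemma borel_measurable_trunc: "i \<le> n \<Longrightarrow> trunc y i \<in> borel_measurable (F i)"
  using adapted[of i] unfolding trunc_def[abs_def] by measurable

lemma borel_measurable_cond_wt: "cond_wt i \<in> borel_measurable (F (i - 1))"
  unfolding cond_wt_def[abs_def] by measurable

lemma borel_measurable_exp_process:
  assumes "k \<le> n"
  shows "exp_process y l k \<in> borel_measurable (F k)"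
proof -
  have [measurable]: "(\<lambda>\<omega>. \<Sum>i=1..k. trunc y i \<omega>) \<in> borel_measurable (F k)"
    "(\<lambda>\<omega>. \<Sum>i=1..k. cond_wt i \<omega>) \<in> borel_measurable (F k)"
    using assms by (auto intro!: borel_measurable_sum measurable_F_mono[OF _ _ borel_measurable_trunc]
        measurable_F_mono[OF _ _ borel_measurable_cond_wt])
  show ?thesis
    unfolding exp_process_def[abs_def] by measurable
qed

lemma exp_process_0 [simp]: "exp_process y l 0 \<omega> = 1"
  by (simp add: exp_process_def)

lemma exp_process_Suc:
  "exp_process y l (Suc k) \<omega>
    = exp_process y l k \<omega> * exp (- (l\<^sup>2 / 2 * cond_wt (Suc k) \<omega>)) * exp (l * trunc y (Suc k) \<omega>)"
  unfolding exp_process_def by (simp add: exp_add[symmetric] exp_diff algebra_simps)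

lemma exp_process_le:
  assumes "0 < y" "0 \<le> l"
  shows "exp_process y l k \<omega> \<le> exp (l * (k * y))"
proof -
  have "(\<Sum>i=1..k. trunc y i \<omega>) \<le> k * y"
    using sum_mono[of "{1..k}" "\<lambda>i. trunc y i \<omega>" "\<lambda>_. y"] assms by (simp add: trunc_def)
  then have "l * (\<Sum>i=1..k. trunc y i \<omega>) \<le> l * (k * y)"
    using assms by (simp add: mult_left_mono)
  moreover have "0 \<le> l\<^sup>2 / 2 * (\<Sum>i=1..k. cond_wt i \<omega>)"
    by (simp add: cond_wt_def sum_nonneg)
  ultimately show ?thesis
    unfolding exp_process_def by simp
qed

lemma integrable_exp_process:
  assumes "k \<le> n" "0 < y" "0 \<le> l"
  shows "integrable M (exp_process y l k)"
  using assms exp_process_le[OF assms(2,3)]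
  by (intro integrable_const_bound[where B="exp (l * (k * y))"])
    (auto simp: exp_process_def intro: measurable_F_M borel_measurable_exp_process)

lemma integral_mult_\<xi>_eq_0:
  assumes i: "1 \<le> i" "i \<le> n" and W: "W \<in> borel_measurable (F (i - 1))"
    and W_bounded: "\<And>\<omega>. \<omega> \<in> space M \<Longrightarrow> \<bar>W \<omega>\<bar> \<le> K"
  shows "integrable M (\<lambda>\<omega>. W \<omega> * \<xi> i \<omega>)" "(\<integral>\<omega>. W \<omega> * \<xi> i \<omega> \<partial>M) = 0"
proof -
  interpret S: sigma_finite_subalgebra M "F (i - 1)"
    using sigma_finite_subalgebra_F i by simp
  have [measurable]: "W \<in> borel_measurable M" "\<xi> i \<in> borel_measurable M"
    using measurable_F_M[OF _ W] borel_measurable_\<xi> i by auto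
  show int: "integrable M (\<lambda>\<omega>. W \<omega> * \<xi> i \<omega>)"
    using integrable_\<xi> i W_bounded by (intro integrable_mult_bounded) auto
  have "(\<integral>\<omega>. W \<omega> * \<xi> i \<omega> \<partial>M) = (\<integral>\<omega>. W \<omega> * real_cond_exp M (F (i - 1)) (\<xi> i) \<omega> \<partial>M)"
    using int W by (intro S.real_cond_exp_intg(2)[symmetric]) auto
  also have "\<dots> = (\<integral>\<omega>. 0 \<partial>M)"
    using cond_exp_\<xi>[OF i] by (intro integral_cong_AE) auto
  finally show "(\<integral>\<omega>. W \<omega> * \<xi> i \<omega> \<partial>M) = 0" by simp
qed

lemma integral_mult_wt_le_cond_wt:
  assumes i: "1 \<le> i" "i \<le> n" and W: "W \<in> borel_measurable (F (i - 1))"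
    and W_bounds: "\<And>\<omega>. \<omega> \<in> space M \<Longrightarrow> 0 \<le> W \<omega> \<and> W \<omega> \<le> K"
  shows "integrable M (\<lambda>\<omega>. W \<omega> * wt \<alpha> (\<xi> i \<omega>))"
    "integrable M (\<lambda>\<omega>. W \<omega> * cond_wt i \<omega>)"
    "(\<integral>\<omega>. W \<omega> * wt \<alpha> (\<xi> i \<omega>) \<partial>M) \<le> (\<integral>\<omega>. W \<omega> * cond_wt i \<omega> \<partial>M)"
proof -
  interpret S: sigma_finite_subalgebra M "F (i - 1)"
    using sigma_finite_subalgebra_F i by simp
  let ?E = "real_cond_exp M (F (i - 1)) (\<lambda>w. wt \<alpha> (\<xi> i w))"
  have [measurable]: "W \<in> borel_measurable M" "\<xi> i \<in> borel_measurable M"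
    "cond_wt i \<in> borel_measurable M"
    using measurable_F_M[OF _ W] measurable_F_M[OF _ borel_measurable_cond_wt]
      borel_measurable_\<xi> i by auto
  show int: "integrable M (\<lambda>\<omega>. W \<omega> * wt \<alpha> (\<xi> i \<omega>))"
    using integrable_wt i W_bounds by (intro integrable_mult_bounded) force+
  have int_E: "integrable M (\<lambda>\<omega>. W \<omega> * ?E \<omega>)"
    using int W by (intro S.real_cond_exp_intg(1)) auto
  show int_cond: "integrable M (\<lambda>\<omega>. W \<omega> * cond_wt i \<omega>)"
    by (rule Bochner_Integration.integrable_bound[OF int_E])
      (use W_bounds in \<open>auto simp: abs_mult cond_wt_def intro!: mult_left_mono\<close>)
  have "(\<integral>\<omega>. W \<omega> * wt \<alpha> (\<xi> i \<omega>) \<partial>M) = (\<integral>\<omega>. W \<omega> * ?E \<omega> \<partial>M)"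
    using int W by (intro S.real_cond_exp_intg(2)[symmetric]) auto
  also have "\<dots> \<le> (\<integral>\<omega>. W \<omega> * cond_wt i \<omega> \<partial>M)"
    using W_bounds by (intro integral_mono[OF int_E int_cond])
      (auto simp: cond_wt_def intro!: mult_left_mono)
  finally show "(\<integral>\<omega>. W \<omega> * wt \<alpha> (\<xi> i \<omega>) \<partial>M) \<le> (\<integral>\<omega>. W \<omega> * cond_wt i \<omega> \<partial>M)" .
qed

lemma exp_trunc_le:
  assumes "0 < y" "0 < l" "l \<le> y powr (\<alpha> - 1)"
  shows "exp (l * trunc y i \<omega>) \<le> 1 + l * \<xi> i \<omega> + l\<^sup>2 / 2 * wt \<alpha> (\<xi> i \<omega>)"
proof -
  have "exp (l * trunc y i \<omega>) \<le> 1 + l * trunc y i \<omega> + l\<^sup>2 / 2 * wt \<alpha> (trunc y i \<omega>)"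
    using assms \<alpha> by (intro exp_le_quadratic_wt) (auto simp: trunc_def)
  also have "\<dots> \<le> 1 + l * \<xi> i \<omega> + l\<^sup>2 / 2 * wt \<alpha> (\<xi> i \<omega>)"
    using assms by (auto simp: trunc_def wt_nonneg wt_def[of _ 0])
  finally show ?thesis .
qed


lemma integral_mult_exp_trunc_le:
  assumes i: "1 \<le> i" "i \<le> n" and W: "W \<in> borel_measurable (F (i - 1))"
    and W_bounds: "\<And>\<omega>. \<omega> \<in> space M \<Longrightarrow> 0 \<le> W \<omega> \<and> W \<omega> \<le> K"
    and y: "0 < y" and l: "0 < l" "l \<le> y powr (\<alpha> - 1)"
  shows "(\<integral>\<omega>. W \<omega> * exp (l * trunc y i \<omega>) \<partial>M) \<le> (\<integral>\<omega>. W \<omega> * (1 + l\<^sup>2 / 2 * cond_wt i \<omega>) \<partial>M)"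
proof -
  have W_abs: "\<And>\<omega>. \<omega> \<in> space M \<Longrightarrow> \<bar>W \<omega>\<bar> \<le> K"
    using W_bounds by force
  note int_\<xi> = integral_mult_\<xi>_eq_0[OF i W W_abs]
  note int_wt = integral_mult_wt_le_cond_wt[OF i W W_bounds]
  have [measurable]: "W \<in> borel_measurable M" "trunc y i \<in> borel_measurable M"
    using measurable_F_M[OF _ W] measurable_F_M[OF _ borel_measurable_trunc] i by auto
  have int_W: "integrable M W"
    using W_abs by (intro integrable_const_bound[where B=K]) auto
  have int_exp: "integrable M (\<lambda>\<omega>. W \<omega> * exp (l * trunc y i \<omega>))"
  proof (rule integrable_const_bound[where B="K * exp (l * y)"])
    have "W \<omega> * exp (l * trunc y i \<omega>) \<le> K * exp (l * y)" if "\<omega> \<in> space M" for \<omega>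
    proof (rule mult_mono)
      show "exp (l * trunc y i \<omega>) \<le> exp (l * y)"
        using y l by (simp add: trunc_def)
    qed (use W_bounds[OF that] in auto)
    then show "AE \<omega> in M. norm (W \<omega> * exp (l * trunc y i \<omega>)) \<le> K * exp (l * y)"
      using W_bounds by (intro AE_I2) auto
  qed measurable
  have "(\<integral>\<omega>. W \<omega> * exp (l * trunc y i \<omega>) \<partial>M)
      \<le> (\<integral>\<omega>. W \<omega> + l * (W \<omega> * \<xi> i \<omega>) + l\<^sup>2 / 2 * (W \<omega> * wt \<alpha> (\<xi> i \<omega>)) \<partial>M)"
  proof (intro integral_mono int_exp)
    fix \<omega> assume "\<omega> \<in> space M"
    then have "W \<omega> * exp (l * trunc y i \<omega>) \<le> W \<omega> * (1 + l * \<xi> i \<omega> + l\<^sup>2 / 2 * wt \<alpha> (\<xi> i \<omega>))"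
      using W_bounds exp_trunc_le[OF y l] by (intro mult_left_mono) auto
    then show "W \<omega> * exp (l * trunc y i \<omega>)
        \<le> W \<omega> + l * (W \<omega> * \<xi> i \<omega>) + l\<^sup>2 / 2 * (W \<omega> * wt \<alpha> (\<xi> i \<omega>))"
      by (simp add: algebra_simps)
  qed (use int_W int_\<xi> int_wt in auto)
  also have "\<dots> = (\<integral>\<omega>. W \<omega> \<partial>M) + l\<^sup>2 / 2 * (\<integral>\<omega>. W \<omega> * wt \<alpha> (\<xi> i \<omega>) \<partial>M)"
    using int_W int_\<xi> int_wt by simp
  also have "\<dots> \<le> (\<integral>\<omega>. W \<omega> \<partial>M) + l\<^sup>2 / 2 * (\<integral>\<omega>. W \<omega> * cond_wt i \<omega> \<partial>M)"
    using int_wt(3) by (simp add: mult_left_mono)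
  also have "\<dots> = (\<integral>\<omega>. W \<omega> + l\<^sup>2 / 2 * (W \<omega> * cond_wt i \<omega>) \<partial>M)"
    using int_W int_wt(2) by simp
  also have "\<dots> = (\<integral>\<omega>. W \<omega> * (1 + l\<^sup>2 / 2 * cond_wt i \<omega>) \<partial>M)"
    by (simp add: algebra_simps)
  finally show ?thesis .
qed

lemma exp_process_supermartingale:
  assumes k: "k < n" and A: "A \<in> sets (F k)"
    and y: "0 < y" and l: "0 < l" "l \<le> y powr (\<alpha> - 1)"
  shows "(\<integral>\<omega>. exp_process y l (Suc k) \<omega> * indicator A \<omega> \<partial>M)
    \<le> (\<integral>\<omega>. exp_process y l k \<omega> * indicator A \<omega> \<partial>M)"
proof -
  let ?Z = "exp_process y l k"
  define W where "W \<omega> = ?Z \<omega> * indicator A \<omega> * exp (- (l\<^sup>2 / 2 * cond_wt (Suc k) \<omega>))" for \<omega>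
  have W: "W \<in> borel_measurable (F (Suc k - 1))"
    using borel_measurable_exp_process[of k y l] borel_measurable_cond_wt[of "Suc k"] A k
    unfolding W_def[abs_def] by simp
  have W_bounds: "0 \<le> W \<omega> \<and> W \<omega> \<le> exp (l * (k * y))" for \<omega>
  proof -
    have "exp (- (l\<^sup>2 / 2 * cond_wt (Suc k) \<omega>)) \<le> 1"
      by (simp add: cond_wt_def)
    then have "W \<omega> \<le> exp (l * (k * y)) * 1 * 1"
      unfolding W_def using exp_process_le[OF y, of l k \<omega>] l
      by (intro mult_mono) (auto simp: exp_process_def)
    then show ?thesis
      by (simp add: W_def exp_process_def)
  qed
  have "(\<integral>\<omega>. exp_process y l (Suc k) \<omega> * indicator A \<omega> \<partial>M)
      = (\<integral>\<omega>. W \<omega> * exp (l * trunc y (Suc k) \<omega>) \<partial>M)"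
    unfolding W_def exp_process_Suc by (simp add: algebra_simps)
  also have "\<dots> \<le> (\<integral>\<omega>. W \<omega> * (1 + l\<^sup>2 / 2 * cond_wt (Suc k) \<omega>) \<partial>M)"
    using k W W_bounds y l by (intro integral_mult_exp_trunc_le) auto
  also have "\<dots> \<le> (\<integral>\<omega>. ?Z \<omega> * indicator A \<omega> \<partial>M)"
  proof (rule integral_mono')
    show "integrable M (\<lambda>\<omega>. ?Z \<omega> * indicator A \<omega>)"
      using A k y l sets_F_subset[of k]
      by (intro integrable_real_mult_indicator integrable_exp_process) auto
    fix \<omega>
    define s where "s = l\<^sup>2 / 2 * cond_wt (Suc k) \<omega>"
    have "exp (- s) * (1 + s) \<le> 1"
      using exp_ge_add_one_self[of s] by (simp add: exp_minus field_simps)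
    then have "?Z \<omega> * indicator A \<omega> * (exp (- s) * (1 + s)) \<le> ?Z \<omega> * indicator A \<omega>"
      by (intro mult_left_le) (auto simp: exp_process_def)
    then show "W \<omega> * (1 + l\<^sup>2 / 2 * cond_wt (Suc k) \<omega>) \<le> ?Z \<omega> * indicator A \<omega>"
      unfolding W_def s_def by (simp add: algebra_simps)
  qed (auto simp: exp_process_def)
  finally show ?thesis .
qed


lemma measure_jump_le:
  assumes i: "1 \<le> i" "i \<le> n" and y: "0 < y"
  shows "measure M {\<omega> \<in> space M. y < \<xi> i \<omega>} \<le> (\<integral>\<omega>. wt \<alpha> (\<xi> i \<omega>) \<partial>M) / wt \<alpha> y"
proof -
  have [measurable]: "\<xi> i \<in> borel_measurable M"
    using borel_measurable_\<xi> i by simp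
  have "measure M {\<omega> \<in> space M. y < \<xi> i \<omega>} \<le> measure M {\<omega> \<in> space M. wt \<alpha> y \<le> wt \<alpha> (\<xi> i \<omega>)}"
    using y \<alpha> by (intro finite_measure_mono) (auto intro: wt_mono)
  also have "\<dots> \<le> (\<integral>\<omega>. wt \<alpha> (\<xi> i \<omega>) \<partial>M) / wt \<alpha> y"
    using integrable_wt i y
    by (intro integral_Markov_inequality_measure[where A="space M"]) (auto simp: wt_nonneg wt_pos)
  finally show ?thesis .
qed

lemma measure_reach_exp_process_le:
  assumes y: "0 < y" and l: "0 < l" "l \<le> y powr (\<alpha> - 1)" and "0 < c"
  shows "measure M {\<omega> \<in> space M. \<exists>k\<le>n. c \<le> exp_process y l k \<omega>} \<le> 1 / c"
proof -
  have "measure M {\<omega> \<in> space M. \<exists>k\<le>n. c \<le> exp_process y l k \<omega>}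
      \<le> (\<integral>\<omega>. exp_process y l 0 \<omega> \<partial>M) / c"
    using assms
    by (intro nonneg_supermartingale_maximal_inequality borel_measurable_exp_process
        integrable_exp_process exp_process_supermartingale) (auto simp: exp_process_def)
  then show ?thesis
    by (simp add: prob_space)
qed

lemma AE_cond_wt_eq:
  "AE \<omega> in M. \<forall>i\<in>{1..n}. cond_wt i \<omega> = real_cond_exp M (F (i - 1)) (\<lambda>w. wt \<alpha> (\<xi> i w)) \<omega>"
proof (rule AE_finite_allI)
  fix i assume i: "i \<in> {1..n}"
  interpret S: sigma_finite_subalgebra M "F (i - 1)"
    using i by (intro sigma_finite_subalgebra_F) auto
  have "AE \<omega> in M. 0 \<le> real_cond_exp M (F (i - 1)) (\<lambda>w. wt \<alpha> (\<xi> i w)) \<omega>"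
    using borel_measurable_\<xi> i by (intro S.real_cond_exp_pos) (auto simp: wt_nonneg)
  then show "AE \<omega> in M. cond_wt i \<omega> = real_cond_exp M (F (i - 1)) (\<lambda>w. wt \<alpha> (\<xi> i w)) \<omega>"
    by eventually_elim (simp add: cond_wt_def)
qed simp

lemma crossing_imp_reach_or_jump:
  assumes l: "0 < l" and k: "k \<in> {1..n}"
    and crossing: "x \<le> partial_sum \<xi> k \<omega>" "Upsilon M F \<xi> \<alpha> k \<omega> \<le> u"
    and cond_wt_eq: "\<forall>i\<in>{1..n}. cond_wt i \<omega> = real_cond_exp M (F (i - 1)) (\<lambda>w. wt \<alpha> (\<xi> i w)) \<omega>"
  shows "exp (l * x - l\<^sup>2 / 2 * u) \<le> exp_process y l k \<omega> \<or> (\<exists>i\<in>{1..n}. y < \<xi> i \<omega>)"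
proof (cases "\<forall>i\<in>{1..n}. \<xi> i \<omega> \<le> y")
  case True
  have "(\<Sum>i=1..k. trunc y i \<omega>) = partial_sum \<xi> k \<omega>"
    using True k unfolding partial_sum_def by (intro sum.cong) (auto simp: trunc_def)
  moreover have "(\<Sum>i=1..k. cond_wt i \<omega>) = Upsilon M F \<xi> \<alpha> k \<omega>"
    using cond_wt_eq k unfolding Upsilon_def by (intro sum.cong) auto
  ultimately show ?thesis
    using crossing l unfolding exp_process_def by (simp add: diff_mono mult_left_mono)
qed (auto simp: not_le)

lemma measure_crossing_le:
  assumes y: "0 < y" and l: "0 < l" "l \<le> y powr (\<alpha> - 1)"
  shows "measure M {\<omega> \<in> space M. \<exists>k \<in> {1..n}.
             partial_sum \<xi> k \<omega> \<ge> x \<and> Upsilon M F \<xi> \<alpha> k \<omega> \<le> u}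
    \<le> exp (- (l * x) + l\<^sup>2 / 2 * u) + (\<Sum>i=1..n. \<integral>\<omega>. wt \<alpha> (\<xi> i \<omega>) \<partial>M) / wt \<alpha> y"
proof -
  define c where "c = exp (l * x - l\<^sup>2 / 2 * u)"
  let ?E = "{\<omega> \<in> space M. \<exists>k \<in> {1..n}. partial_sum \<xi> k \<omega> \<ge> x \<and> Upsilon M F \<xi> \<alpha> k \<omega> \<le> u}"
  let ?R = "{\<omega> \<in> space M. \<exists>k\<le>n. c \<le> exp_process y l k \<omega>}"
  let ?J = "\<lambda>i. {\<omega> \<in> space M. y < \<xi> i \<omega>}"
  have events_J: "?J i \<in> events" if "i \<le> n" for i
    using borel_measurable_\<xi>[OF that] by measurable
  have "?R = (\<Union>k\<in>{..n}. {\<omega> \<in> space M. c \<le> exp_process y l k \<omega>})"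
    by auto
  also have "\<dots> \<in> events"
    using measurable_F_M[OF _ borel_measurable_exp_process] by (intro sets.finite_UN) auto
  finally have events_R: "?R \<in> events" .
  have events_J_Un: "(\<Union>i\<in>{1..n}. ?J i) \<in> events"
    using events_J by (intro sets.finite_UN) auto
  have "AE \<omega> in M. \<omega> \<in> ?E \<longrightarrow> \<omega> \<in> ?R \<union> (\<Union>i\<in>{1..n}. ?J i)"
    using AE_cond_wt_eq
  proof eventually_elim
    case (elim \<omega>)
    show ?case
    proof
      assume "\<omega> \<in> ?E"
      then obtain k where \<omega>: "\<omega> \<in> space M" and k: "k \<in> {1..n}"
        and crossing: "x \<le> partial_sum \<xi> k \<omega>" "Upsilon M F \<xi> \<alpha> k \<omega> \<le> u"
        by auto
      from crossing_imp_reach_or_jump[OF l(1) k crossing elim, of y] \<omega> k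
      show "\<omega> \<in> ?R \<union> (\<Union>i\<in>{1..n}. ?J i)"
        unfolding c_def by auto
    qed
  qed
  then have "measure M ?E \<le> measure M (?R \<union> (\<Union>i\<in>{1..n}. ?J i))"
    using sets.Un[OF events_R events_J_Un] by (rule finite_measure_mono_AE)
  also have "\<dots> \<le> measure M ?R + measure M (\<Union>i\<in>{1..n}. ?J i)"
    using events_R events_J_Un by (rule measure_Un_le)
  also have "\<dots> \<le> 1 / c + (\<Sum>i=1..n. measure M (?J i))"
  proof (rule add_mono)
    show "measure M ?R \<le> 1 / c"
      unfolding c_def by (rule measure_reach_exp_process_le[OF y l]) simp
    show "measure M (\<Union>i\<in>{1..n}. ?J i) \<le> (\<Sum>i=1..n. measure M (?J i))"
      using events_J by (intro measure_UNION_le) auto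
  qed
  also have "\<dots> \<le> 1 / c + (\<Sum>i=1..n. (\<integral>\<omega>. wt \<alpha> (\<xi> i \<omega>) \<partial>M) / wt \<alpha> y)"
    using y by (intro add_mono sum_mono measure_jump_le) auto
  also have "\<dots> = exp (- (l * x) + l\<^sup>2 / 2 * u) + (\<Sum>i=1..n. \<integral>\<omega>. wt \<alpha> (\<xi> i \<omega>) \<partial>M) / wt \<alpha> y"
    using exp_minus[of "l * x - l\<^sup>2 / 2 * u"]
    by (simp add: c_def inverse_eq_divide sum_divide_distrib)
  finally show ?thesis .
qed

end

section \<open>Choice of the parameters\<close>

lemma gaussian_regime_parameters:
  fixes a x u C :: real
  assumes a: "0 < a" "a < 1" and x: "0 < x" and u: "0 < u"
  defines "y \<equiv> (u / x) powr (1 / (1 - a))"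
  shows "0 < y" "x / u \<le> y powr (a - 1)"
    "- (x / u * x) + (x / u)\<^sup>2 / 2 * u = - (x\<^sup>2 / (2 * u))"
    "C / wt a y = C * (x / u) powr (2 / (1 - a)) * exp (- ((u / x) powr (a / (1 - a))))"
proof -
  show y_pos: "0 < y"
    unfolding y_def using x u by simp
  have "y powr (a - 1) = (u / x) powr (1 / (1 - a) * (a - 1))"
    unfolding y_def by (simp add: powr_powr)
  also have "1 / (1 - a) * (a - 1) = -1"
    using a by (simp add: field_simps)
  finally show "x / u \<le> y powr (a - 1)"
    using x u by (simp add: powr_minus)
  show "- (x / u * x) + (x / u)\<^sup>2 / 2 * u = - (x\<^sup>2 / (2 * u))"
    using u by (simp add: field_simps power2_eq_square)
  have "y\<^sup>2 = (u / x) powr (2 / (1 - a))"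
    using y_pos unfolding y_def by (simp add: powr_powr flip: powr_realpow)
  moreover have "y powr a = (u / x) powr (a / (1 - a))"
    unfolding y_def by (simp add: powr_powr)
  ultimately have "wt a y = (u / x) powr (2 / (1 - a)) * exp ((u / x) powr (a / (1 - a)))"
    using y_pos by (simp add: wt_def pos_part_def)
  moreover have "(x / u) powr (2 / (1 - a)) * (u / x) powr (2 / (1 - a)) = 1"
    using x u by (simp flip: powr_mult)
  ultimately show "C / wt a y = C * (x / u) powr (2 / (1 - a)) * exp (- ((u / x) powr (a / (1 - a))))"
    using x u by (simp add: exp_minus field_simps)
qed

lemma weibull_regime_parameters:
  fixes a x u C :: real
  assumes x: "0 < x"
  shows "- (x powr (a - 1) * x) + (x powr (a - 1))\<^sup>2 / 2 * u
      = - (x powr a * (1 - u / (2 * x powr (2 - a))))"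
    "C / wt a x = C / x\<^sup>2 * exp (- (x powr a))"
proof -
  have "x powr (a - 1) * x = x powr a"
    using x powr_mult_base[of x "a - 1"] by (simp add: mult.commute)
  moreover have "(x powr (a - 1))\<^sup>2 = x powr a / x powr (2 - a)"
    using x by (simp add: power2_eq_square flip: powr_add powr_diff)
  ultimately show "- (x powr (a - 1) * x) + (x powr (a - 1))\<^sup>2 / 2 * u
      = - (x powr a * (1 - u / (2 * x powr (2 - a))))"
    by (simp add: field_simps)
  show "C / wt a x = C / x\<^sup>2 * exp (- (x powr a))"
    using x by (simp add: wt_def pos_part_def exp_minus field_simps)
qed

text \<open>Both bounds hold for all \<open>x, u > 0\<close>; the case distinction only selects the better
  one.\<close>

theorem theorem2p1:
  fixes M :: "'a measure" and F :: "nat \<Rightarrow> 'a measure"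
    and \<xi> :: "nat \<Rightarrow> 'a \<Rightarrow> real" and n :: nat and \<alpha> x u :: real
  assumes "prob_space M"
    and "n \<ge> 1"
    and sub: "\<And>i. i \<le> n \<Longrightarrow> subalgebra M (F i)"
    and mono: "\<And>i j. i \<le> j \<Longrightarrow> j \<le> n \<Longrightarrow> sets (F i) \<subseteq> sets (F j)"
    and F0: "sets (F 0) = {{}, space M}"
    and xi0: "\<And>\<omega>. \<xi> 0 \<omega> = 0"
    and adapted: "\<And>i. i \<le> n \<Longrightarrow> \<xi> i \<in> borel_measurable (F i)"
    and integ: "\<And>i. i \<le> n \<Longrightarrow> integrable M (\<xi> i)"
    and mart: "\<And>i. 1 \<le> i \<Longrightarrow> i \<le> n \<Longrightarrow>
                 AE \<omega> in M. real_cond_exp M (F (i - 1)) (\<xi> i) \<omega> = 0"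
    and alpha: "0 < \<alpha>" "\<alpha> < 1"
    and Cn_fin: "\<And>i. 1 \<le> i \<Longrightarrow> i \<le> n \<Longrightarrow> integrable M (\<lambda>\<omega>. wt \<alpha> (\<xi> i \<omega>))"
    and xpos: "x > 0" and upos: "u > 0"
  shows "measure M {\<omega> \<in> space M. \<exists>k \<in> {1..n}.
             partial_sum \<xi> k \<omega> \<ge> x \<and> Upsilon M F \<xi> \<alpha> k \<omega> \<le> u}
         \<le> (let C = (\<Sum>i = 1..n. integral\<^sup>L M (\<lambda>\<omega>. wt \<alpha> (\<xi> i \<omega>))) in
            if x < u powr (1 / (2 - \<alpha>)) then
              exp (- (x\<^sup>2 / (2 * u)))
              + C * (x / u) powr (2 / (1 - \<alpha>)) * exp (- ((u / x) powr (\<alpha> / (1 - \<alpha>))))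
            else
              exp (- (x powr \<alpha> * (1 - u / (2 * x powr (2 - \<alpha>)))))
              + C / x\<^sup>2 * exp (- (x powr \<alpha>)))"
proof -
  interpret martingale_differences M F n \<xi> \<alpha>
    unfolding martingale_differences_def martingale_differences_axioms_def
      finite_filtration_def finite_filtration_axioms_def
    using assms by blast
  note gaussian = gaussian_regime_parameters[OF alpha xpos upos]
  note weibull = weibull_regime_parameters[OF xpos]
  show ?thesis
  proof (cases "x < u powr (1 / (2 - \<alpha>))")
    case True
    from measure_crossing_le[OF gaussian(1) _ gaussian(2), of x u] show ?thesis
      using True xpos upos unfolding Let_def gaussian(3,4) by simp
  next
    case False
    from measure_crossing_le[of x "x powr (\<alpha> - 1)" x u] show ?thesis
      using False xpos unfolding Let_def weibull by simp
  qed
qed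

end
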